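(* In the setting below, there exist an affine function $c:\mathbb R^{n\times n}\to\mathbb R$ and an affine matrix-valued function $\mathbf Z:\mathbb R^{n\times n}\to\mathbb R^{n\times n}$, determined by $\mathrm{metric}^{(0)}$, and for each $l\in[1,t]$ a constant $\mu_l\in\mathbb R$ and a matrix $\mathbf B^{(l)}\in\mathbb R^{n\times n}$, determined by $\mathrm{metric}^{(l)}$ and the label vector $\mathbf y$, such that for every $\theta\in\mathbb R^m$, $$\min_{\mathbf Q\in\Delta}\max_{\mathbf P\in\Delta\cap\Gamma}\Big[O^{(0)}(\mathbf Q,\mathbf P)-\langle\mathbf Q^\top\mathbf 1,\Psi^\top\theta\rangle\Big]$$ equals the optimal value of the linear program $$\min_{\mathbf Q\in\Delta,\ \boldsymbol\alpha\in\mathbb R^{n\times n}_{\ge0},\ \boldsymbol\beta\in\mathbb R^t_{\ge0},\ v\ge0}\ v+c(\mathbf Q)-\langle\mathbf Q,\Psi^\top\theta\mathbf 1^\top\rangle+\sum_{l=1}^t\beta_l(\mu_l-\tau_l)$$ $$\text{s.t.}\quad v\ge\mathbf Z(\mathbf Q)_{(i,k)}-\alpha_{i,k}+\tfrac1k\textstyle\sum_j\alpha_{j,k}+\sum_{l=1}^t\beta_l\,(\mathbf B^{(l)})_{(i,k)}\quad\forall i,k\in[1,n].$$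
   Context: $n,m,t\ge1$, $\mathbf y\in\{0,1\}^n$, $l^\star=\sum_iy_i$, $\Psi\in\mathbb R^{m\times n}$, $\tau_1,\dots,\tau_t\in\mathbb R$. Metrics $\mathrm{metric}^{(i)}(\hat{\mathbf y},\check{\mathbf y})=\sum_j\frac{a_j^{(i)}\mathrm{TP}+b_j^{(i)}\mathrm{TN}+f_j^{(i)}(\mathrm{PP},\mathrm{AP})}{g_j^{(i)}(\mathrm{PP},\mathrm{AP})}$, $i=0,\dots,t$, with $\mathrm{TP}=\sum\hat y_i\check y_i$, $\mathrm{TN}=\sum(1-\hat y_i)(1-\check y_i)$, $\mathrm{PP}=\sum\hat y_i$, $\mathrm{AP}=\sum\check y_i$, constants $a_j^{(i)},b_j^{(i)}$, functions $f_j^{(i)},g_j^{(i)}:\{0,\dots,n\}^2\to\mathbb R$ with $g_j^{(i)}$ never zero. $\Delta=\{\mathbf P\in\mathbb R^{n\times n}: p_{i,k}\ge0;\ p_{i,k}\le\frac1k\sum_jp_{j,k}\ \forall i,k;\ \sum_k\frac1k\sum_ip_{i,k}\le1\}$. From $\mathbf P$: $\mathbf p_k^1=\mathbf P_{(:,k)}$ ($k\ge1$), $\mathbf p_0^1=\mathbf 0$; $r_k=\frac1k\mathbf 1^\top\mathbf p_k^1$ ($k\ge1$), $r_0=1-\sum_{k\ge1}r_k$; $\mathbf p_k^0=r_k\mathbf 1-\mathbf p_k^1$; likewise $\mathbf q_l^1,\mathbf q_l^0,s_l$ from $\mathbf Q$. $O^{(0)}(\mathbf Q,\mathbf P)=\sum_{k,l=0}^n\sum_j\frac{1}{g^{(0)}_j(k,l)}\{a^{(0)}_j[\mathbf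 p_k^1\cdot\mathbf q_l^1]+b^{(0)}_j[\mathbf p_k^0\cdot\mathbf q_l^0]+f^{(0)}_j(k,l)r_ks_l\}$. $\Gamma=\{\mathbf P:\sum_{k=0}^n\sum_j\frac{1}{g^{(i)}_j(k,l^\star)}\{a^{(i)}_j[\mathbf p_k^1\cdot\mathbf y]+b^{(i)}_j[\mathbf p_k^0\cdot(\mathbf 1-\mathbf y)]+f^{(i)}_j(k,l^\star)r_k\}\ge\tau_i\ \forall i\in[1,t]\}$. *)

theory Defs
  imports Complex_Main "HOL-Library.Extended_Real"
begin

(* Matrices in R^{n x n} are functions nat => nat => real, entries indexed by
   i (sample) and k (count) in {1..n}; vectors in R^n are nat => real on {1..n}.
   Metric data: for metric index i in {0..t} there are J i terms; term j has
   constants a i j, b i j and functions f i j, g i j on {0..n}^2. *)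

definition dotv :: "nat \<Rightarrow> (nat \<Rightarrow> real) \<Rightarrow> (nat \<Rightarrow> real) \<Rightarrow> real" where
  "dotv n u w = (\<Sum>i\<in>{1..n}. u i * w i)"

definition pv1 :: "(nat \<Rightarrow> nat \<Rightarrow> real) \<Rightarrow> nat \<Rightarrow> nat \<Rightarrow> real" where
  "pv1 P k = (\<lambda>i. if k = 0 then 0 else P i k)"

definition rr :: "nat \<Rightarrow> (nat \<Rightarrow> nat \<Rightarrow> real) \<Rightarrow> nat \<Rightarrow> real" where
  "rr n P k = (if k = 0
      then 1 - (\<Sum>k'\<in>{1..n}. (1 / real k') * (\<Sum>i\<in>{1..n}. P i k'))
      else (1 / real k) * (\<Sum>i\<in>{1..n}. P i k))"

definition pv0 :: "nat \<Rightarrow> (nat \<Rightarrow> nat \<Rightarrow> real) \<Rightarrow> nat \<Rightarrow> nat \<Rightarrow> real" where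
  "pv0 n P k = (\<lambda>i. rr n P k - pv1 P k i)"

definition Delta :: "nat \<Rightarrow> (nat \<Rightarrow> nat \<Rightarrow> real) set" where
  "Delta n = {P. (\<forall>i k. (i \<notin> {1..n} \<or> k \<notin> {1..n}) \<longrightarrow> P i k = 0)
      \<and> (\<forall>i\<in>{1..n}. \<forall>k\<in>{1..n}. 0 \<le> P i k \<and> P i k \<le> (1 / real k) * (\<Sum>j\<in>{1..n}. P j k))
      \<and> (\<Sum>k\<in>{1..n}. (1 / real k) * (\<Sum>i\<in>{1..n}. P i k)) \<le> 1}"

definition O0 :: "nat \<Rightarrow> (nat \<Rightarrow> nat \<Rightarrow> real) \<Rightarrow> (nat \<Rightarrow> nat \<Rightarrow> real)
    \<Rightarrow> (nat \<Rightarrow> nat \<Rightarrow> nat \<Rightarrow> nat \<Rightarrow> real) \<Rightarrow> (nat \<Rightarrow> nat \<Rightarrow> nat \<Rightarrow> nat \<Rightarrow> real)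
    \<Rightarrow> (nat \<Rightarrow> nat) \<Rightarrow> (nat \<Rightarrow> nat \<Rightarrow> real) \<Rightarrow> (nat \<Rightarrow> nat \<Rightarrow> real) \<Rightarrow> real" where
  "O0 n a b f g J Q P =
     (\<Sum>k\<in>{0..n}. \<Sum>l\<in>{0..n}. \<Sum>j<J 0.
        (1 / g 0 j k l) * (a 0 j * dotv n (pv1 P k) (pv1 Q l)
                          + b 0 j * dotv n (pv0 n P k) (pv0 n Q l)
                          + f 0 j k l * rr n P k * rr n Q l))"

definition lstar :: "nat \<Rightarrow> (nat \<Rightarrow> nat) \<Rightarrow> nat" where
  "lstar n y = (\<Sum>i\<in>{1..n}. y i)"

definition Gamma :: "nat \<Rightarrow> nat \<Rightarrow> (nat \<Rightarrow> nat \<Rightarrow> real) \<Rightarrow> (nat \<Rightarrow> nat \<Rightarrow> real)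
    \<Rightarrow> (nat \<Rightarrow> nat \<Rightarrow> nat \<Rightarrow> nat \<Rightarrow> real) \<Rightarrow> (nat \<Rightarrow> nat \<Rightarrow> nat \<Rightarrow> nat \<Rightarrow> real)
    \<Rightarrow> (nat \<Rightarrow> nat) \<Rightarrow> (nat \<Rightarrow> nat) \<Rightarrow> (nat \<Rightarrow> real) \<Rightarrow> (nat \<Rightarrow> nat \<Rightarrow> real) set" where
  "Gamma n t a b f g J y \<tau> = {P. \<forall>i\<in>{1..t}.
     (\<Sum>k\<in>{0..n}. \<Sum>j<J i.
        (1 / g i j k (lstar n y)) * (a i j * dotv n (pv1 P k) (\<lambda>s. real (y s))
           + b i j * dotv n (pv0 n P k) (\<lambda>s. 1 - real (y s))
           + f i j k (lstar n y) * rr n P k)) \<ge> \<tau> i}"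

definition PsiT :: "nat \<Rightarrow> (nat \<Rightarrow> nat \<Rightarrow> real) \<Rightarrow> (nat \<Rightarrow> real) \<Rightarrow> nat \<Rightarrow> real" where
  "PsiT m Psi \<theta> = (\<lambda>i. \<Sum>r\<in>{1..m}. Psi r i * \<theta> r)"

definition game_value where
  "game_value n t m a b f g J y \<tau> Psi \<theta> =
     (INF Q\<in>Delta n. SUP P\<in>Delta n \<inter> Gamma n t a b f g J y \<tau>.
        ereal (O0 n a b f g J Q P - dotv n (\<lambda>i. \<Sum>k\<in>{1..n}. Q i k) (PsiT m Psi \<theta>)))"

definition aff_scalar :: "nat \<Rightarrow> real \<Rightarrow> (nat \<Rightarrow> nat \<Rightarrow> real) \<Rightarrow> (nat \<Rightarrow> nat \<Rightarrow> real) \<Rightarrow> real" where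
  "aff_scalar n c0 C Q = c0 + (\<Sum>i\<in>{1..n}. \<Sum>k\<in>{1..n}. C i k * Q i k)"

definition aff_matrix :: "nat \<Rightarrow> (nat \<Rightarrow> nat \<Rightarrow> real) \<Rightarrow> (nat \<Rightarrow> nat \<Rightarrow> nat \<Rightarrow> nat \<Rightarrow> real)
    \<Rightarrow> (nat \<Rightarrow> nat \<Rightarrow> real) \<Rightarrow> nat \<Rightarrow> nat \<Rightarrow> real" where
  "aff_matrix n Z0 ZL Q = (\<lambda>i k. Z0 i k + (\<Sum>j\<in>{1..n}. \<Sum>l\<in>{1..n}. ZL i k j l * Q j l))"

definition lp_value where
  "lp_value n t m c Z \<mu> B \<tau> Psi \<theta> =
     Inf {ereal (v + c Q - (\<Sum>i\<in>{1..n}. \<Sum>k\<in>{1..n}. Q i k * PsiT m Psi \<theta> i)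
                  + (\<Sum>l\<in>{1..t}. \<beta> l * (\<mu> l - \<tau> l)))
          | Q \<alpha> \<beta> v. Q \<in> Delta n
              \<and> (\<forall>i\<in>{1..n}. \<forall>k\<in>{1..n}. 0 \<le> \<alpha> i k)
              \<and> (\<forall>l\<in>{1..t}. 0 \<le> (\<beta>::nat \<Rightarrow> real) l)
              \<and> 0 \<le> (v::real)
              \<and> (\<forall>i\<in>{1..n}. \<forall>k\<in>{1..n}.
                   v \<ge> Z Q i k - \<alpha> i k + (1 / real k) * (\<Sum>j\<in>{1..n}. \<alpha> j k)
                        + (\<Sum>l\<in>{1..t}. \<beta> l * B l i k))}"

end

theory Submission
  imports Defs
begin

(* The objective O^(0)(Q, P) is bi-affine in (Q, P) and each constraint defining Gamma is affine
   in P, so for fixed Q the inner maximum is a linear program over Delta \<inter> Gamma.  By LP duality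
   (Farkas' lemma, obtained by Fourier-Motzkin elimination) it equals the minimum of the dual
   program, and the outer minimum over Q merges with this one into a single linear program.  Its
   constraints are the dual constraints multiplied by k, so Z(Q) = k W(Q) and B^(l) = k A_l, where
   W(Q) and A_l are the coefficient matrices of P in the objective and in the l-th constraint of
   Gamma. *)

section \<open>Farkas' lemma by Fourier--Motzkin elimination\<close>

definition dot_on :: "'v set \<Rightarrow> ('v \<Rightarrow> real) \<Rightarrow> ('v \<Rightarrow> real) \<Rightarrow> real" where
  "dot_on V a x = (\<Sum>v\<in>V. a v * x v)"

type_synonym 'v ineq = "('v \<Rightarrow> real) \<times> real"

definition satisfies :: "'v set \<Rightarrow> 'v ineq set \<Rightarrow> ('v \<Rightarrow> real) \<Rightarrow> bool" where
  "satisfies V R x \<longleftrightarrow> (\<forall>r\<in>R. dot_on V (fst r) x \<le> snd r)"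

inductive_set ineq_cone :: "'v ineq set \<Rightarrow> 'v ineq set" for R where
  zero: "((\<lambda>v. 0), 0) \<in> ineq_cone R"
| base: "r \<in> R \<Longrightarrow> r \<in> ineq_cone R"
| add: "(a, b) \<in> ineq_cone R \<Longrightarrow> (a', b') \<in> ineq_cone R
          \<Longrightarrow> ((\<lambda>v. a v + a' v), b + b') \<in> ineq_cone R"
| scale: "(a, b) \<in> ineq_cone R \<Longrightarrow> 0 \<le> c \<Longrightarrow> ((\<lambda>v. c * a v), c * b) \<in> ineq_cone R"

lemma dot_on_combine:
  "dot_on V (\<lambda>v. c * a v + c' * a' v) x = c * dot_on V a x + c' * dot_on V a' x"
  by (simp add: dot_on_def sum.distrib sum_distrib_left algebra_simps)

lemma dot_on_insert_upd:
  assumes "finite V" "u \<notin> V"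
  shows "dot_on (insert u V) a (x(u := t)) = a u * t + dot_on V a x"
proof -
  have "dot_on V a (x(u := t)) = dot_on V a x"
    using assms(2) unfolding dot_on_def by (intro sum.cong) auto
  then show ?thesis using assms by (simp add: dot_on_def)
qed

lemma ineq_cone_subset:
  assumes "R' \<subseteq> ineq_cone R"
  shows "ineq_cone R' \<subseteq> ineq_cone R"
proof
  show "r \<in> ineq_cone R" if "r \<in> ineq_cone R'" for r
    using that by induction (use assms in \<open>auto intro: ineq_cone.intros\<close>)
qed

lemma ineq_cone_coeff_zero:
  assumes "\<And>r. r \<in> R \<Longrightarrow> fst r u = 0" and "r \<in> ineq_cone R"
  shows "fst r u = 0"
  using assms(2) by induction (use assms(1) in auto)

lemma ineq_cone_image_combination:
  assumes "finite I" and "r \<in> ineq_cone (h ` I)"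
  shows "\<exists>y. (\<forall>i\<in>I. 0 \<le> y i) \<and> (\<forall>v. fst r v = (\<Sum>i\<in>I. y i * fst (h i) v))
            \<and> snd r = (\<Sum>i\<in>I. y i * snd (h i))"
  using assms(2)
proof induction
  case zero
  show ?case by (intro exI[of _ "\<lambda>_. 0"]) simp
next
  case (base r)
  then obtain i where "i \<in> I" "r = h i" by blast
  then show ?case
    by (intro exI[of _ "\<lambda>j. of_bool (j = i)"]) (simp add: assms(1) if_distrib cong: if_cong)
next
  case (add a b a' b')
  then obtain y y' where "\<forall>i\<in>I. 0 \<le> y i" "\<forall>v. a v = (\<Sum>i\<in>I. y i * fst (h i) v)"
    "b = (\<Sum>i\<in>I. y i * snd (h i))" "\<forall>i\<in>I. 0 \<le> y' i"
    "\<forall>v. a' v = (\<Sum>i\<in>I. y' i * fst (h i) v)" "b' = (\<Sum>i\<in>I. y' i * snd (h i))"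
    by auto
  then show ?case
    by (intro exI[of _ "\<lambda>i. y i + y' i"]) (simp add: sum.distrib algebra_simps)
next
  case (scale a b c)
  then obtain y where "\<forall>i\<in>I. 0 \<le> y i" "\<forall>v. a v = (\<Sum>i\<in>I. y i * fst (h i) v)"
    "b = (\<Sum>i\<in>I. y i * snd (h i))"
    by auto
  then show ?case using \<open>0 \<le> c\<close>
    by (intro exI[of _ "\<lambda>i. c * y i"]) (simp add: sum_distrib_left algebra_simps)
qed

lemma finite_sets_separated:
  fixes L U :: "real set"
  assumes "finite L" "finite U" "\<forall>l\<in>L. \<forall>u\<in>U. l \<le> u"
  obtains t where "\<forall>l\<in>L. l \<le> t" "\<forall>u\<in>U. t \<le> u"
proof (cases "U = {}")
  case True
  then show ?thesis using that[of "Max (insert 0 L)"] assms(1) by auto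
next
  case False
  then show ?thesis using that[of "Min U"] assms by auto
qed

definition fm_combine :: "'v \<Rightarrow> 'v ineq \<Rightarrow> 'v ineq \<Rightarrow> 'v ineq" where
  "fm_combine u p m = ((\<lambda>v. - fst m u * fst p v + fst p u * fst m v), - fst m u * snd p + fst p u * snd m)"

definition fm_eliminate :: "'v \<Rightarrow> 'v ineq set \<Rightarrow> 'v ineq set" where
  "fm_eliminate u R = {r\<in>R. fst r u = 0}
     \<union> (\<lambda>(p, m). fm_combine u p m) ` ({p\<in>R. fst p u > 0} \<times> {m\<in>R. fst m u < 0})"

lemma finite_fm_eliminate: "finite R \<Longrightarrow> finite (fm_eliminate u R)"
  by (simp add: fm_eliminate_def)

lemma fm_eliminate_coeff: "r \<in> fm_eliminate u R \<Longrightarrow> fst r u = 0"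
  by (auto simp: fm_eliminate_def fm_combine_def)

lemma fm_eliminate_subset_cone: "fm_eliminate u R \<subseteq> ineq_cone R"
proof -
  have "fm_combine u p m \<in> ineq_cone R" if "p \<in> R" "m \<in> R" "fst p u > 0" "fst m u < 0" for p m
  proof -
    have "(\<lambda>v. (- fst m u) * fst p v, (- fst m u) * snd p) \<in> ineq_cone R"
      using that by (intro ineq_cone.scale) (auto intro: ineq_cone.base)
    moreover have "(\<lambda>v. fst p u * fst m v, fst p u * snd m) \<in> ineq_cone R"
      using that by (intro ineq_cone.scale) (auto intro: ineq_cone.base)
    ultimately show ?thesis unfolding fm_combine_def by (rule ineq_cone.add)
  qed
  then show ?thesis by (auto simp: fm_eliminate_def intro: ineq_cone.base)
qed

(* Constraints with positive coefficient at u bound x u from above, those with negative coefficient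
   from below; the combined inequalities say that every lower bound is below every upper bound. *)

lemma fm_eliminate_extend:
  assumes "finite V" "u \<notin> V" "finite R" and sat: "satisfies V (fm_eliminate u R) x"
  shows "\<exists>t. satisfies (insert u V) R (x(u := t))"
proof -
  define slack where "slack r = (snd r - dot_on V (fst r) x) / fst r u" for r :: "'a ineq"
  define Rp where "Rp = {r\<in>R. fst r u > 0}"
  define Rm where "Rm = {r\<in>R. fst r u < 0}"
  have slack_le: "slack m \<le> slack p" if "p \<in> Rp" "m \<in> Rm" for p m
  proof -
    have "(p, m) \<in> {p\<in>R. fst p u > 0} \<times> {m\<in>R. fst m u < 0}"
      using that by (simp add: Rp_def Rm_def)
    then have "fm_combine u p m \<in> fm_eliminate u R"
      unfolding fm_eliminate_def by (intro UnI2 image_eqI[where x = "(p, m)"]) simp_all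
    then have "dot_on V (fst (fm_combine u p m)) x \<le> snd (fm_combine u p m)"
      using sat by (simp add: satisfies_def)
    then have "fst m u * (snd p - dot_on V (fst p) x) \<le> fst p u * (snd m - dot_on V (fst m) x)"
      unfolding fm_combine_def fst_conv snd_conv dot_on_combine by (simp add: algebra_simps)
    then show ?thesis using that
      by (simp add: slack_def Rp_def Rm_def divide_le_eq le_divide_eq mult.commute)
  qed
  have "finite (slack ` Rm)" "finite (slack ` Rp)"
    using assms(3) by (auto simp: Rp_def Rm_def)
  then obtain t where t: "\<forall>l\<in>slack ` Rm. l \<le> t" "\<forall>l\<in>slack ` Rp. t \<le> l"
    by (rule finite_sets_separated) (auto intro: slack_le)
  have "fst r u * t + dot_on V (fst r) x \<le> snd r" if "r \<in> R" for r
  proof -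
    consider "fst r u > 0" | "fst r u < 0" | "fst r u = 0" by linarith
    then show ?thesis
    proof cases
      case 1
      then have "r \<in> Rp" using that by (simp add: Rp_def)
      then have "t \<le> slack r" using t(2) by blast
      then show ?thesis using 1 by (simp add: slack_def le_divide_eq algebra_simps)
    next
      case 2
      then have "r \<in> Rm" using that by (simp add: Rm_def)
      then have "slack r \<le> t" using t(1) by blast
      then show ?thesis using 2 by (simp add: slack_def divide_le_eq algebra_simps)
    next
      case 3
      then have "r \<in> fm_eliminate u R" using that by (simp add: fm_eliminate_def)
      then show ?thesis using sat 3 by (simp add: satisfies_def)
    qed
  qed
  then show ?thesis
    unfolding satisfies_def dot_on_insert_upd[OF assms(1,2)] by blast
qed

lemma farkas_infeasible:
  assumes "finite V" "finite R" "\<nexists>x. satisfies V R x"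
  shows "\<exists>r\<in>ineq_cone R. (\<forall>v\<in>V. fst r v = 0) \<and> snd r < 0"
  using assms
proof (induction V arbitrary: R rule: finite_induct)
  case empty
  then obtain r where "r \<in> R" "snd r < 0"
    by (auto simp: satisfies_def dot_on_def not_le)
  then show ?case by (auto intro: ineq_cone.base)
next
  case (insert u V)
  have "\<nexists>x. satisfies V (fm_eliminate u R) x"
  proof
    assume "\<exists>x. satisfies V (fm_eliminate u R) x"
    then obtain x where "satisfies V (fm_eliminate u R) x" ..
    then have "\<exists>t. satisfies (insert u V) R (x(u := t))"
      by (rule fm_eliminate_extend[OF insert.hyps(1,2) insert.prems(1)])
    then show False using insert.prems(2) by blast
  qed
  with insert.IH[OF finite_fm_eliminate[OF insert.prems(1)]] obtain r
    where r: "r \<in> ineq_cone (fm_eliminate u R)" "\<forall>v\<in>V. fst r v = 0" "snd r < 0"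
    by blast
  have "fst r u = 0" using ineq_cone_coeff_zero[OF fm_eliminate_coeff r(1)] .
  moreover have "r \<in> ineq_cone R"
    using ineq_cone_subset[OF fm_eliminate_subset_cone] r(1) by (rule subsetD)
  ultimately show ?case using r(2,3) by (intro bexI[of _ r]) auto
qed

lemma farkas_strict:
  fixes a :: "'i \<Rightarrow> 'v \<Rightarrow> real" and b :: "'i \<Rightarrow> real"
  assumes "finite I" "finite V"
    and "\<And>x. \<forall>i\<in>I. dot_on V (a i) x \<le> b i \<Longrightarrow> dot_on V c x < d"
  obtains (infeasible) y where "\<forall>i\<in>I. 0 \<le> y i" "\<forall>v\<in>V. (\<Sum>i\<in>I. y i * a i v) = 0"
      "(\<Sum>i\<in>I. y i * b i) < 0"
    | (bounded) y where "\<forall>i\<in>I. 0 \<le> y i" "\<forall>v\<in>V. (\<Sum>i\<in>I. y i * a i v) = c v"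
      "(\<Sum>i\<in>I. y i * b i) < d"
proof -
  \<comment> \<open>Adding the row \<open>- c \<bullet> x \<le> - d\<close> makes the system infeasible.  In the certificate the
    weight of that row is either zero, giving the first alternative, or can be scaled to one.\<close>
  define h where "h j = (case j of None \<Rightarrow> ((\<lambda>v. - c v), - d) | Some i \<Rightarrow> (a i, b i))" for j
  define I' where "I' = insert None (Some ` I)"
  have sum_I': "(\<Sum>j\<in>I'. F j) = F None + (\<Sum>i\<in>I. F (Some i))" for F :: "'i option \<Rightarrow> real"
    using assms(1) by (simp add: I'_def sum.reindex)
  have fin: "finite I'" using assms(1) by (simp add: I'_def)
  have "\<nexists>x. satisfies V (h ` I') x"
  proof
    assume "\<exists>x. satisfies V (h ` I') x"
    then obtain x where "\<forall>j\<in>I'. dot_on V (fst (h j)) x \<le> snd (h j)"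
      by (auto simp: satisfies_def)
    then have "\<forall>i\<in>I. dot_on V (a i) x \<le> b i" "d \<le> dot_on V c x"
      by (auto simp: I'_def h_def dot_on_def sum_negf)
    then show False using assms(3) by (meson not_le)
  qed
  then obtain r where r: "r \<in> ineq_cone (h ` I')" "\<forall>v\<in>V. fst r v = 0" "snd r < 0"
    using farkas_infeasible[OF assms(2) finite_imageI[OF fin]] by blast
  then obtain z where z: "\<forall>j\<in>I'. 0 \<le> z j" "\<forall>v. fst r v = (\<Sum>j\<in>I'. z j * fst (h j) v)"
    "snd r = (\<Sum>j\<in>I'. z j * snd (h j))"
    using ineq_cone_image_combination[OF fin r(1)] by blast
  define y where "y i = z (Some i)" for i
  have y: "\<forall>i\<in>I. 0 \<le> y i" and "0 \<le> z None" using z(1) by (auto simp: y_def I'_def)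
  have coeff: "(\<Sum>i\<in>I. y i * a i v) = z None * c v" if "v \<in> V" for v
    using r(2) z(2) that by (simp add: sum_I' h_def y_def)
  have bound: "(\<Sum>i\<in>I. y i * b i) < z None * d"
    using r(3) z(3) by (simp add: sum_I' h_def y_def)
  show thesis
  proof (cases "z None = 0")
    case True
    then show thesis using infeasible y coeff bound by simp
  next
    case False
    with \<open>0 \<le> z None\<close> have pos: "0 < z None" by simp
    show thesis
    proof (rule bounded[of "\<lambda>i. y i / z None"])
      show "\<forall>i\<in>I. 0 \<le> y i / z None" using y pos by simp
      show "\<forall>v\<in>V. (\<Sum>i\<in>I. y i / z None * a i v) = c v"
        using coeff pos by (simp add: sum_divide_distrib[symmetric])
      show "(\<Sum>i\<in>I. y i / z None * b i) < d"
        using bound pos by (simp add: sum_divide_distrib[symmetric] divide_less_eq mult.commute)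
    qed
  qed
qed

section \<open>Affine and bi-affine functions of matrices\<close>

type_synonym matrix = "nat \<Rightarrow> nat \<Rightarrow> real"

definition mat_inner :: "nat \<Rightarrow> matrix \<Rightarrow> matrix \<Rightarrow> real" where
  "mat_inner n C P = (\<Sum>i\<in>{1..n}. \<Sum>k\<in>{1..n}. C i k * P i k)"

lemma mat_inner_add: "mat_inner n (\<lambda>i k. C i k + D i k) P = mat_inner n C P + mat_inner n D P"
  by (simp add: mat_inner_def sum.distrib algebra_simps)

lemma mat_inner_diff: "mat_inner n (\<lambda>i k. C i k - D i k) P = mat_inner n C P - mat_inner n D P"
  by (simp add: mat_inner_def sum_subtractf algebra_simps)

lemma mat_inner_scale: "mat_inner n (\<lambda>i k. c * C i k) P = c * mat_inner n C P"
  by (simp add: mat_inner_def sum_distrib_left algebra_simps)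

lemma mat_inner_uminus: "mat_inner n (\<lambda>i k. - C i k) P = - mat_inner n C P"
  by (simp add: mat_inner_def sum_negf)

lemma mat_inner_entry:
  assumes "i \<in> {1..n}" "k \<in> {1..n}"
  shows "mat_inner n (\<lambda>i' k'. if i' = i \<and> k' = k then c else 0) P = c * P i k"
proof -
  have "(\<Sum>k'\<in>{1..n}. (if i' = i \<and> k' = k then c else 0) * P i' k') = (if i' = i then c * P i k else 0)"
    for i'
    using assms(2) by (cases "i' = i") (auto simp: if_distrib if_distribR cong: if_cong)
  then show ?thesis using assms(1) by (simp add: mat_inner_def)
qed

lemma mat_inner_column:
  assumes "k \<in> {1..n}"
  shows "mat_inner n (\<lambda>i' k'. if k' = k then c else 0) P = c * (\<Sum>i\<in>{1..n}. P i k)"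
  using assms by (simp add: mat_inner_def if_distrib if_distribR sum_distrib_left cong: if_cong)

definition affine_in :: "nat \<Rightarrow> (matrix \<Rightarrow> real) \<Rightarrow> bool" where
  "affine_in n F \<longleftrightarrow> (\<exists>c0 C. \<forall>P. F P = c0 + mat_inner n C P)"

lemma affine_in_const: "affine_in n (\<lambda>P. c)"
  unfolding affine_in_def by (intro exI[of _ c] exI[of _ "\<lambda>_ _. 0"]) (simp add: mat_inner_def)

lemma affine_in_entry:
  assumes "i \<in> {1..n}" "k \<in> {1..n}"
  shows "affine_in n (\<lambda>P. P i k)"
  unfolding affine_in_def
  by (intro exI[of _ 0] exI[of _ "\<lambda>i' k'. if i' = i \<and> k' = k then 1 else 0"])
    (simp add: mat_inner_entry[OF assms])

lemma affine_in_add: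
  assumes "affine_in n F" "affine_in n G"
  shows "affine_in n (\<lambda>P. F P + G P)"
proof -
  obtain c C d D where "\<forall>P. F P = c + mat_inner n C P" "\<forall>P. G P = d + mat_inner n D P"
    using assms unfolding affine_in_def by blast
  then show ?thesis
    unfolding affine_in_def
    by (intro exI[of _ "c + d"] exI[of _ "\<lambda>i k. C i k + D i k"]) (simp add: mat_inner_add)
qed

lemma affine_in_scale:
  assumes "affine_in n F"
  shows "affine_in n (\<lambda>P. c * F P)"
proof -
  obtain c0 C where "\<forall>P. F P = c0 + mat_inner n C P"
    using assms unfolding affine_in_def by blast
  then show ?thesis
    unfolding affine_in_def
    by (intro exI[of _ "c * c0"] exI[of _ "\<lambda>i k. c * C i k"]) (simp add: mat_inner_scale algebra_simps)
qed

lemma affine_in_scale_right: "affine_in n F \<Longrightarrow> affine_in n (\<lambda>P. F P * c)"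
  using affine_in_scale[of n F c] by (simp add: mult.commute)

lemma affine_in_diff: "affine_in n F \<Longrightarrow> affine_in n G \<Longrightarrow> affine_in n (\<lambda>P. F P - G P)"
  using affine_in_add[of n F "\<lambda>P. (-1) * G P"] affine_in_scale[of n G "-1"] by simp

lemma affine_in_sum:
  "finite S \<Longrightarrow> (\<And>s. s \<in> S \<Longrightarrow> affine_in n (F s)) \<Longrightarrow> affine_in n (\<lambda>P. \<Sum>s\<in>S. F s P)"
  by (induction S rule: finite_induct) (simp_all add: affine_in_const affine_in_add)

lemma affine_in_pv1:
  assumes "i \<in> {1..n}" "k \<le> n"
  shows "affine_in n (\<lambda>P. pv1 P k i)"
  using assms by (cases "k = 0") (simp_all add: pv1_def affine_in_const affine_in_entry)

lemma affine_in_rr: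
  assumes "k \<le> n"
  shows "affine_in n (\<lambda>P. rr n P k)"
proof (cases "k = 0")
  case True
  have "affine_in n (\<lambda>P. 1 - (\<Sum>k'\<in>{1..n}. 1 / real k' * (\<Sum>i\<in>{1..n}. P i k')))"
    by (intro affine_in_diff affine_in_const affine_in_sum affine_in_scale affine_in_entry) auto
  then show ?thesis using True unfolding rr_def by simp
next
  case False
  have "affine_in n (\<lambda>P. 1 / real k * (\<Sum>i\<in>{1..n}. P i k))"
    using False assms by (intro affine_in_scale affine_in_sum affine_in_entry) auto
  then show ?thesis using False unfolding rr_def by simp
qed

lemma affine_in_pv0:
  assumes "i \<in> {1..n}" "k \<le> n"
  shows "affine_in n (\<lambda>P. pv0 n P k i)"
  unfolding pv0_def using assms by (intro affine_in_diff affine_in_rr affine_in_pv1)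

definition biaffine_in :: "nat \<Rightarrow> (matrix \<Rightarrow> matrix \<Rightarrow> real) \<Rightarrow> bool" where
  "biaffine_in n H \<longleftrightarrow> (\<exists>c0 C Z0 ZL. \<forall>Q P.
     H Q P = c0 + mat_inner n C Q + mat_inner n (\<lambda>i k. Z0 i k + mat_inner n (ZL i k) Q) P)"

lemma biaffine_in_add:
  assumes "biaffine_in n F" "biaffine_in n G"
  shows "biaffine_in n (\<lambda>Q P. F Q P + G Q P)"
proof -
  obtain c C Z ZL d D Y YL where
    "\<forall>Q P. F Q P = c + mat_inner n C Q + mat_inner n (\<lambda>i k. Z i k + mat_inner n (ZL i k) Q) P"
    "\<forall>Q P. G Q P = d + mat_inner n D Q + mat_inner n (\<lambda>i k. Y i k + mat_inner n (YL i k) Q) P"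
    using assms unfolding biaffine_in_def by blast
  then show ?thesis
    unfolding biaffine_in_def
    by (intro exI[of _ "c + d"] exI[of _ "\<lambda>i k. C i k + D i k"] exI[of _ "\<lambda>i k. Z i k + Y i k"]
        exI[of _ "\<lambda>i k j l. ZL i k j l + YL i k j l"])
      (simp add: mat_inner_add[symmetric] algebra_simps)
qed

lemma biaffine_in_scale:
  assumes "biaffine_in n F"
  shows "biaffine_in n (\<lambda>Q P. c * F Q P)"
proof -
  obtain c0 C Z ZL where
    "\<forall>Q P. F Q P = c0 + mat_inner n C Q + mat_inner n (\<lambda>i k. Z i k + mat_inner n (ZL i k) Q) P"
    using assms unfolding biaffine_in_def by blast
  then show ?thesis
    unfolding biaffine_in_def
    by (intro exI[of _ "c * c0"] exI[of _ "\<lambda>i k. c * C i k"] exI[of _ "\<lambda>i k. c * Z i k"]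
        exI[of _ "\<lambda>i k j l. c * ZL i k j l"])
      (simp add: mat_inner_scale[symmetric] algebra_simps)
qed

lemma biaffine_in_sum:
  "finite S \<Longrightarrow> (\<And>s. s \<in> S \<Longrightarrow> biaffine_in n (F s)) \<Longrightarrow> biaffine_in n (\<lambda>Q P. \<Sum>s\<in>S. F s Q P)"
proof (induction S rule: finite_induct)
  case empty
  show ?case unfolding biaffine_in_def
    by (intro exI[of _ 0] exI[of _ "\<lambda>_ _. 0"] exI[of _ "\<lambda>_ _. 0"] exI[of _ "\<lambda>_ _ _ _. 0"])
      (simp add: mat_inner_def)
next
  case (insert s S)
  then show ?case by (simp add: biaffine_in_add)
qed

lemma biaffine_in_mult:
  assumes "affine_in n F" "affine_in n G"
  shows "biaffine_in n (\<lambda>Q P. G P * F Q)"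
proof -
  obtain a A b B where F: "\<forall>Q. F Q = a + mat_inner n A Q" and G: "\<forall>P. G P = b + mat_inner n B P"
    using assms unfolding affine_in_def by blast
  have inner: "mat_inner n (\<lambda>j l. B i k * A j l) Q = B i k * mat_inner n A Q" for i k Q
    by (rule mat_inner_scale)
  have outer: "mat_inner n (\<lambda>i k. B i k * c) P = c * mat_inner n B P" for c P
    by (simp add: mat_inner_def sum_distrib_left algebra_simps)
  have "G P * F Q = a * b + mat_inner n (\<lambda>i k. b * A i k) Q
      + mat_inner n (\<lambda>i k. a * B i k + mat_inner n (\<lambda>j l. B i k * A j l) Q) P" for Q P
    unfolding inner mat_inner_add mat_inner_scale outer using F G by (simp add: algebra_simps)
  then show ?thesis
    unfolding biaffine_in_def
    by (intro exI[of _ "a * b"] exI[of _ "\<lambda>i k. b * A i k"] exI[of _ "\<lambda>i k. a * B i k"]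
        exI[of _ "\<lambda>i k j l. B i k * A j l"]) simp
qed

lemma biaffine_in_O0:
  fixes a b :: "nat \<Rightarrow> nat \<Rightarrow> real" and f g :: "nat \<Rightarrow> nat \<Rightarrow> nat \<Rightarrow> nat \<Rightarrow> real"
  shows "biaffine_in n (O0 n a b f g J)"
proof -
  have "biaffine_in n (\<lambda>Q P. \<Sum>k\<in>{0..n}. \<Sum>l\<in>{0..n}. \<Sum>j<J 0.
      1 / g 0 j k l * (a 0 j * (\<Sum>i\<in>{1..n}. pv1 P k i * pv1 Q l i)
        + b 0 j * (\<Sum>i\<in>{1..n}. pv0 n P k i * pv0 n Q l i) + f 0 j k l * (rr n P k * rr n Q l)))"
    by (intro biaffine_in_sum biaffine_in_scale biaffine_in_add biaffine_in_mult
        affine_in_pv1 affine_in_pv0 affine_in_rr) auto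
  then show ?thesis unfolding O0_def dotv_def by (simp add: mult.assoc)
qed

lemma affine_in_Gamma_constraint:
  fixes a b :: "nat \<Rightarrow> nat \<Rightarrow> real" and f g :: "nat \<Rightarrow> nat \<Rightarrow> nat \<Rightarrow> nat \<Rightarrow> real"
    and J y :: "nat \<Rightarrow> nat"
  shows "affine_in n (\<lambda>P. \<Sum>k\<in>{0..n}. \<Sum>j<J i. 1 / g i j k L * (a i j * dotv n (pv1 P k) (\<lambda>s. real (y s))
      + b i j * dotv n (pv0 n P k) (\<lambda>s. 1 - real (y s)) + f i j k L * rr n P k))"
  unfolding dotv_def
  by (intro affine_in_sum affine_in_scale affine_in_add affine_in_scale_right
      affine_in_pv1 affine_in_pv0 affine_in_rr) auto

section \<open>Duality for the inner linear program\<close>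

(* The dual of maximising <W, P> over P \<in> Delta with <A_l, P> \<ge> \<tau>_l - \<mu>_l: \<alpha> i k / k, v and
   \<beta> l are the multipliers of P i k \<le> (1/k) \<Sum>_j P j k, of the mass constraint and of the l-th
   metric constraint, and the constraint belonging to P i k is multiplied by k. *)
definition dual_feasible :: "nat \<Rightarrow> nat \<Rightarrow> matrix \<Rightarrow> (nat \<Rightarrow> matrix) \<Rightarrow> matrix \<Rightarrow> (nat \<Rightarrow> real)
    \<Rightarrow> real \<Rightarrow> bool" where
  "dual_feasible n t W A \<alpha> \<beta> v \<longleftrightarrow>
     (\<forall>i\<in>{1..n}. \<forall>k\<in>{1..n}. 0 \<le> \<alpha> i k) \<and> (\<forall>l\<in>{1..t}. 0 \<le> \<beta> l) \<and> 0 \<le> v \<and>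
     (\<forall>i\<in>{1..n}. \<forall>k\<in>{1..n}. real k * W i k - \<alpha> i k + 1 / real k * (\<Sum>j\<in>{1..n}. \<alpha> j k)
        + (\<Sum>l\<in>{1..t}. \<beta> l * (real k * A l i k)) \<le> v)"

lemma Delta_weighted_column_le:
  assumes "P \<in> Delta n" "k \<in> {1..n}" "\<forall>i\<in>{1..n}. 0 \<le> \<alpha> i"
  shows "(\<Sum>i\<in>{1..n}. \<alpha> i * P i k) \<le> (\<Sum>i\<in>{1..n}. \<alpha> i) * (\<Sum>i\<in>{1..n}. P i k) / real k"
proof -
  have "(\<Sum>i\<in>{1..n}. \<alpha> i * P i k) \<le> (\<Sum>i\<in>{1..n}. \<alpha> i * ((\<Sum>j\<in>{1..n}. P j k) / real k))"
    using assms by (intro sum_mono mult_left_mono) (auto simp: Delta_def)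
  also have "\<dots> = (\<Sum>i\<in>{1..n}. \<alpha> i) * ((\<Sum>j\<in>{1..n}. P j k) / real k)"
    by (rule sum_distrib_right[symmetric])
  finally show ?thesis by simp
qed

lemma dual_feasible_column_bound:
  assumes P: "P \<in> Delta n" and dual: "dual_feasible n t W A \<alpha> \<beta> v" and k: "k \<in> {1..n}"
  shows "(\<Sum>i\<in>{1..n}. W i k * P i k)
    \<le> v * ((\<Sum>i\<in>{1..n}. P i k) / real k) - (\<Sum>i\<in>{1..n}. (\<Sum>l\<in>{1..t}. \<beta> l * A l i k) * P i k)"
proof -
  define S where "S = (\<Sum>j\<in>{1..n}. \<alpha> j k)"
  define G where "G i = (\<Sum>l\<in>{1..t}. \<beta> l * A l i k)" for i
  have "W i k * P i k \<le> (v + \<alpha> i k - S / real k) * P i k / real k - G i * P i k"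
    if i: "i \<in> {1..n}" for i
  proof -
    have "real k * W i k - \<alpha> i k + 1 / real k * S + (\<Sum>l\<in>{1..t}. \<beta> l * (real k * A l i k)) \<le> v"
      using dual i k unfolding dual_feasible_def S_def by blast
    moreover have "(\<Sum>l\<in>{1..t}. \<beta> l * (real k * A l i k)) = real k * G i"
      by (simp add: G_def sum_distrib_left algebra_simps)
    ultimately have "real k * W i k \<le> v + \<alpha> i k - S / real k - real k * G i"
      by simp
    then have "real k * W i k * P i k \<le> (v + \<alpha> i k - S / real k - real k * G i) * P i k"
      using P i k by (intro mult_right_mono) (auto simp: Delta_def)
    then show ?thesis using k by (simp add: field_simps)
  qed
  then have "(\<Sum>i\<in>{1..n}. W i k * P i k)
      \<le> (\<Sum>i\<in>{1..n}. (v + \<alpha> i k - S / real k) * P i k / real k - G i * P i k)"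
    by (rule sum_mono)
  also have "\<dots> = v * ((\<Sum>i\<in>{1..n}. P i k) / real k) - (\<Sum>i\<in>{1..n}. G i * P i k)
      + ((\<Sum>i\<in>{1..n}. \<alpha> i k * P i k) - S * (\<Sum>i\<in>{1..n}. P i k) / real k) / real k"
    by (simp add: sum_subtractf sum_divide_distrib[symmetric] sum.distrib sum_distrib_left
        algebra_simps diff_divide_distrib add_divide_distrib)
  also have "\<dots> \<le> v * ((\<Sum>i\<in>{1..n}. P i k) / real k) - (\<Sum>i\<in>{1..n}. G i * P i k)"
    using Delta_weighted_column_le[OF P k, of "\<lambda>i. \<alpha> i k"] dual k
    by (auto simp: S_def dual_feasible_def divide_nonpos_nonneg)
  finally show ?thesis by (simp add: G_def)
qed

lemma weak_duality:
  assumes P: "P \<in> Delta n" and feasible: "\<forall>l\<in>{1..t}. \<tau> l \<le> \<mu> l + mat_inner n (A l) P"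
    and dual: "dual_feasible n t W A \<alpha> \<beta> v"
  shows "mat_inner n W P \<le> v + (\<Sum>l\<in>{1..t}. \<beta> l * (\<mu> l - \<tau> l))"
proof -
  define G where "G i k = (\<Sum>l\<in>{1..t}. \<beta> l * A l i k)" for i k
  have metric: "(\<Sum>k\<in>{1..n}. \<Sum>i\<in>{1..n}. G i k * P i k) = (\<Sum>l\<in>{1..t}. \<beta> l * mat_inner n (A l) P)"
  proof -
    have "(\<Sum>k\<in>{1..n}. \<Sum>i\<in>{1..n}. G i k * P i k)
        = (\<Sum>k\<in>{1..n}. \<Sum>i\<in>{1..n}. \<Sum>l\<in>{1..t}. \<beta> l * (A l i k * P i k))"
      by (simp add: G_def sum_distrib_right mult.assoc)
    also have "\<dots> = (\<Sum>l\<in>{1..t}. \<Sum>k\<in>{1..n}. \<Sum>i\<in>{1..n}. \<beta> l * (A l i k * P i k))"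
      by (subst sum.swap, rule sum.cong[OF refl], rule sum.swap)
    also have "\<dots> = (\<Sum>l\<in>{1..t}. \<beta> l * mat_inner n (A l) P)"
      unfolding mat_inner_def by (subst sum.swap) (simp add: sum_distrib_left)
    finally show ?thesis .
  qed
  have "mat_inner n W P = (\<Sum>k\<in>{1..n}. \<Sum>i\<in>{1..n}. W i k * P i k)"
    unfolding mat_inner_def by (rule sum.swap)
  also have "\<dots> \<le> (\<Sum>k\<in>{1..n}. v * ((\<Sum>i\<in>{1..n}. P i k) / real k) - (\<Sum>i\<in>{1..n}. G i k * P i k))"
    using dual_feasible_column_bound[OF P dual] unfolding G_def by (rule sum_mono)
  also have "\<dots> = v * (\<Sum>k\<in>{1..n}. 1 / real k * (\<Sum>i\<in>{1..n}. P i k))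
      - (\<Sum>k\<in>{1..n}. \<Sum>i\<in>{1..n}. G i k * P i k)"
    by (simp add: sum_subtractf sum_distrib_left sum_divide_distrib)
  also have "\<dots> = v * (\<Sum>k\<in>{1..n}. 1 / real k * (\<Sum>i\<in>{1..n}. P i k))
      - (\<Sum>l\<in>{1..t}. \<beta> l * mat_inner n (A l) P)"
    by (simp only: metric)
  also have "\<dots> \<le> v - (\<Sum>l\<in>{1..t}. \<beta> l * (\<tau> l - \<mu> l))"
  proof (rule diff_mono)
    show "v * (\<Sum>k\<in>{1..n}. 1 / real k * (\<Sum>i\<in>{1..n}. P i k)) \<le> v"
      using P dual by (intro mult_left_le) (auto simp: Delta_def dual_feasible_def)
    show "(\<Sum>l\<in>{1..t}. \<beta> l * (\<tau> l - \<mu> l)) \<le> (\<Sum>l\<in>{1..t}. \<beta> l * mat_inner n (A l) P)"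
      using feasible dual by (intro sum_mono mult_left_mono) (fastforce simp: dual_feasible_def)+
  qed
  finally show ?thesis by (simp add: sum_subtractf right_diff_distrib)
qed

(* The rows a \<bullet> x \<le> b of the system describing Delta \<inter> Gamma in the variables x (i, k) = P i k. *)
datatype constraint = Nonneg "nat \<times> nat" | Column "nat \<times> nat" | Mass | Metric nat

fun constraint_coeff :: "(nat \<Rightarrow> matrix) \<Rightarrow> constraint \<Rightarrow> nat \<times> nat \<Rightarrow> real" where
  "constraint_coeff A (Nonneg q) p = (if p = q then -1 else 0)"
| "constraint_coeff A (Column q) p =
     (if p = q then 1 else 0) - (if snd p = snd q then 1 / real (snd q) else 0)"
| "constraint_coeff A Mass p = 1 / real (snd p)"
| "constraint_coeff A (Metric l) p = - A l (fst p) (snd p)"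

fun constraint_bound :: "(nat \<Rightarrow> real) \<Rightarrow> (nat \<Rightarrow> real) \<Rightarrow> constraint \<Rightarrow> real" where
  "constraint_bound \<mu> \<tau> (Nonneg q) = 0"
| "constraint_bound \<mu> \<tau> (Column q) = 0"
| "constraint_bound \<mu> \<tau> Mass = 1"
| "constraint_bound \<mu> \<tau> (Metric l) = \<mu> l - \<tau> l"

definition constraints :: "nat \<Rightarrow> nat \<Rightarrow> constraint set" where
  "constraints n t = Nonneg ` ({1..n} \<times> {1..n}) \<union> Column ` ({1..n} \<times> {1..n}) \<union> {Mass}
     \<union> Metric ` {1..t}"

lemma finite_constraints [simp]: "finite (constraints n t)"
  by (simp add: constraints_def)

lemma sum_constraints:
  "(\<Sum>r\<in>constraints n t. F r) = (\<Sum>q\<in>{1..n} \<times> {1..n}. F (Nonneg q))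
     + (\<Sum>q\<in>{1..n} \<times> {1..n}. F (Column q)) + F Mass + (\<Sum>l\<in>{1..t}. F (Metric l))"
proof -
  let ?V = "{1..n} \<times> {1..n}"
  have "(\<Sum>r\<in>constraints n t. F r) = (\<Sum>r\<in>Nonneg ` ?V. F r) + (\<Sum>r\<in>Column ` ?V. F r) + F Mass
      + (\<Sum>r\<in>Metric ` {1..t}. F r)"
  proof -
    have "(\<Sum>r\<in>constraints n t. F r) = (\<Sum>r\<in>Nonneg ` ?V \<union> Column ` ?V \<union> {Mass}. F r)
        + (\<Sum>r\<in>Metric ` {1..t}. F r)"
      unfolding constraints_def by (rule sum.union_disjoint) auto
    also have "(\<Sum>r\<in>Nonneg ` ?V \<union> Column ` ?V \<union> {Mass}. F r)
        = (\<Sum>r\<in>Nonneg ` ?V \<union> Column ` ?V. F r) + F Mass"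
      by (subst sum.union_disjoint) auto
    also have "(\<Sum>r\<in>Nonneg ` ?V \<union> Column ` ?V. F r) = (\<Sum>r\<in>Nonneg ` ?V. F r) + (\<Sum>r\<in>Column ` ?V. F r)"
      by (rule sum.union_disjoint) auto
    finally show ?thesis .
  qed
  then show ?thesis by (simp add: sum.reindex inj_on_def)
qed

definition matrix_of :: "nat \<Rightarrow> (nat \<times> nat \<Rightarrow> real) \<Rightarrow> matrix" where
  "matrix_of n x i k = (if i \<in> {1..n} \<and> k \<in> {1..n} then x (i, k) else 0)"

lemma dot_on_square:
  "dot_on ({1..n} \<times> {1..n}) f x = mat_inner n (\<lambda>i k. f (i, k)) (matrix_of n x)"
  by (simp add: dot_on_def mat_inner_def matrix_of_def sum.cartesian_product)

lemma feasible_of_satisfies_constraints: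
  assumes "\<forall>r\<in>constraints n t.
    dot_on ({1..n} \<times> {1..n}) (constraint_coeff A r) x \<le> constraint_bound \<mu> \<tau> r"
  shows "matrix_of n x \<in> Delta n"
    and "\<forall>l\<in>{1..t}. \<tau> l \<le> \<mu> l + mat_inner n (A l) (matrix_of n x)"
proof -
  define P where "P = matrix_of n x"
  have row: "mat_inner n (\<lambda>i k. constraint_coeff A r (i, k)) P \<le> constraint_bound \<mu> \<tau> r"
    if "r \<in> constraints n t" for r
    using assms that unfolding P_def dot_on_square by blast
  have "0 \<le> P i k" if "i \<in> {1..n}" "k \<in> {1..n}" for i k
    using row[of "Nonneg (i, k)"] that by (simp add: constraints_def mat_inner_entry)
  moreover have "P i k \<le> 1 / real k * (\<Sum>j\<in>{1..n}. P j k)" if "i \<in> {1..n}" "k \<in> {1..n}" for i k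
    using row[of "Column (i, k)"] that
    by (simp add: constraints_def mat_inner_diff mat_inner_entry mat_inner_column)
  moreover have "(\<Sum>k\<in>{1..n}. 1 / real k * (\<Sum>i\<in>{1..n}. P i k)) \<le> 1"
  proof -
    have "(\<Sum>k\<in>{1..n}. 1 / real k * (\<Sum>i\<in>{1..n}. P i k)) = mat_inner n (\<lambda>i k. 1 / real k) P"
      unfolding mat_inner_def by (subst sum.swap) (simp add: sum_distrib_left)
    then show ?thesis using row[of Mass] by (simp add: constraints_def)
  qed
  ultimately show "matrix_of n x \<in> Delta n"
    unfolding P_def Delta_def by (auto simp: matrix_of_def)
  show "\<forall>l\<in>{1..t}. \<tau> l \<le> \<mu> l + mat_inner n (A l) (matrix_of n x)"
  proof
    fix l assume "l \<in> {1..t}"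
    then have "mat_inner n (\<lambda>i k. constraint_coeff A (Metric l) (i, k)) P \<le> \<mu> l - \<tau> l"
      using row[of "Metric l"] by (simp add: constraints_def)
    then show "\<tau> l \<le> \<mu> l + mat_inner n (A l) (matrix_of n x)"
      by (simp add: P_def mat_inner_uminus)
  qed
qed

lemma constraint_coeff_combination:
  assumes "i \<in> {1..n}" "k \<in> {1..n}"
  shows "(\<Sum>r\<in>constraints n t. y r * constraint_coeff A r (i, k))
    = - y (Nonneg (i, k)) + y (Column (i, k)) - (\<Sum>j\<in>{1..n}. y (Column (j, k))) / real k
      + y Mass / real k - (\<Sum>l\<in>{1..t}. y (Metric l) * A l i k)"
proof -
  have nonneg: "(\<Sum>q\<in>{1..n} \<times> {1..n}. y (Nonneg q) * constraint_coeff A (Nonneg q) (i, k))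
      = - y (Nonneg (i, k))"
    using assms by (simp add: if_distrib if_distribR sum.delta' cong: if_cong)
  have "y (Column q) * constraint_coeff A (Column q) (i, k)
      = (if q = (i, k) then y (Column q) else 0) - (if snd q = k then y (Column q) / real k else 0)"
    for q by (cases q) (auto simp: algebra_simps)
  then have "(\<Sum>q\<in>{1..n} \<times> {1..n}. y (Column q) * constraint_coeff A (Column q) (i, k))
      = (\<Sum>q\<in>{1..n} \<times> {1..n}. if q = (i, k) then y (Column q) else 0)
        - (\<Sum>q\<in>{1..n} \<times> {1..n}. if snd q = k then y (Column q) / real k else 0)"
    by (simp add: sum_subtractf)
  also have "(\<Sum>q\<in>{1..n} \<times> {1..n}. if q = (i, k) then y (Column q) else 0) = y (Column (i, k))"
    using assms by (simp add: sum.delta)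
  also have "(\<Sum>q\<in>{1..n} \<times> {1..n}. if snd q = k then y (Column q) / real k else 0)
      = (\<Sum>j\<in>{1..n}. y (Column (j, k))) / real k"
    using assms by (simp add: sum.cartesian_product' sum_divide_distrib)
  finally show ?thesis using assms nonneg
    by (simp add: sum_constraints sum_negf)
qed

lemma constraint_bound_combination:
  "(\<Sum>r\<in>constraints n t. y r * constraint_bound \<mu> \<tau> r)
    = y Mass + (\<Sum>l\<in>{1..t}. y (Metric l) * (\<mu> l - \<tau> l))"
  by (simp add: sum_constraints)

lemma dual_feasible_of_multipliers:
  assumes nonneg: "\<forall>r\<in>constraints n t. 0 \<le> y r"
    and coeff: "\<forall>i\<in>{1..n}. \<forall>k\<in>{1..n}. (\<Sum>r\<in>constraints n t. y r * constraint_coeff A r (i, k)) = W i k"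
  shows "dual_feasible n t W A (\<lambda>i k. real k * y (Column (i, k))) (\<lambda>l. y (Metric l)) (y Mass)"
  unfolding dual_feasible_def
proof (intro conjI ballI)
  fix i k assume i: "i \<in> {1..n}" and k: "k \<in> {1..n}"
  show "0 \<le> real k * y (Column (i, k))" using nonneg i k by (simp add: constraints_def)
  define S where "S = (\<Sum>j\<in>{1..n}. y (Column (j, k)))"
  define G where "G = (\<Sum>l\<in>{1..t}. y (Metric l) * A l i k)"
  have "W i k = - y (Nonneg (i, k)) + y (Column (i, k)) - S / real k + y Mass / real k - G"
    using coeff constraint_coeff_combination[OF i k, where y = y and A = A and t = t] i k
    by (simp add: S_def G_def)
  moreover have "1 / real k * (\<Sum>j\<in>{1..n}. real k * y (Column (j, k))) = S"
    using k by (simp add: S_def sum_distrib_left[symmetric])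
  moreover have "(\<Sum>l\<in>{1..t}. y (Metric l) * (real k * A l i k)) = real k * G"
    by (simp add: G_def sum_distrib_left algebra_simps)
  moreover have "0 \<le> real k * y (Nonneg (i, k))" using nonneg i k by (simp add: constraints_def)
  ultimately show "real k * W i k - real k * y (Column (i, k))
      + 1 / real k * (\<Sum>j\<in>{1..n}. real k * y (Column (j, k)))
      + (\<Sum>l\<in>{1..t}. y (Metric l) * (real k * A l i k)) \<le> y Mass"
    using k by (simp add: field_simps)
next
  show "0 \<le> y (Metric l)" if "l \<in> {1..t}" for l using nonneg that by (simp add: constraints_def)
  show "0 \<le> y Mass" using nonneg by (simp add: constraints_def)
qed

lemma dual_feasible_trivial:
  "dual_feasible n t W A (\<lambda>_ _. 0) (\<lambda>_. 0) (\<Sum>i\<in>{1..n}. \<Sum>k\<in>{1..n}. \<bar>real k * W i k\<bar>)"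
proof -
  have "real k * W i k \<le> (\<Sum>i\<in>{1..n}. \<Sum>k\<in>{1..n}. \<bar>real k * W i k\<bar>)"
    if "i \<in> {1..n}" "k \<in> {1..n}" for i k
  proof -
    have "\<bar>real k * W i k\<bar> \<le> (\<Sum>k\<in>{1..n}. \<bar>real k * W i k\<bar>)"
      using that by (intro member_le_sum) auto
    then have "real k * W i k \<le> (\<Sum>k\<in>{1..n}. \<bar>real k * W i k\<bar>)"
      by (meson abs_ge_self order_trans)
    also have "\<dots> \<le> (\<Sum>i\<in>{1..n}. \<Sum>k\<in>{1..n}. \<bar>real k * W i k\<bar>)"
      using that by (intro member_le_sum sum_nonneg) auto
    finally show ?thesis .
  qed
  then show ?thesis by (simp add: dual_feasible_def sum_nonneg)
qed

lemma dual_feasible_add_ray: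
  assumes "dual_feasible n t W A \<alpha> \<beta> v" "dual_feasible n t (\<lambda>_ _. 0) A \<alpha>' \<beta>' v'" "0 \<le> s"
  shows "dual_feasible n t W A (\<lambda>i k. \<alpha> i k + s * \<alpha>' i k) (\<lambda>l. \<beta> l + s * \<beta>' l) (v + s * v')"
  unfolding dual_feasible_def
proof (intro conjI ballI)
  fix i k assume i: "i \<in> {1..n}" and k: "k \<in> {1..n}"
  show "0 \<le> \<alpha> i k + s * \<alpha>' i k" using assms i k by (simp add: dual_feasible_def)
  have "real k * W i k - \<alpha> i k + 1 / real k * (\<Sum>j\<in>{1..n}. \<alpha> j k)
      + (\<Sum>l\<in>{1..t}. \<beta> l * (real k * A l i k)) \<le> v"
    using assms(1) i k by (simp add: dual_feasible_def)
  moreover have "s * (- \<alpha>' i k + 1 / real k * (\<Sum>j\<in>{1..n}. \<alpha>' j k)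
      + (\<Sum>l\<in>{1..t}. \<beta>' l * (real k * A l i k))) \<le> s * v'"
    using assms(2,3) i k by (intro mult_left_mono) (simp_all add: dual_feasible_def)
  ultimately show "real k * W i k - (\<alpha> i k + s * \<alpha>' i k)
      + 1 / real k * (\<Sum>j\<in>{1..n}. \<alpha> j k + s * \<alpha>' j k)
      + (\<Sum>l\<in>{1..t}. (\<beta> l + s * \<beta>' l) * (real k * A l i k)) \<le> v + s * v'"
    by (simp add: sum.distrib sum_distrib_left algebra_simps)
next
  show "0 \<le> \<beta> l + s * \<beta>' l" if "l \<in> {1..t}" for l
    using assms that by (simp add: dual_feasible_def)
  show "0 \<le> v + s * v'" using assms by (simp add: dual_feasible_def)
qed

lemma strong_duality:
  assumes "\<forall>P\<in>Delta n. (\<forall>l\<in>{1..t}. \<tau> l \<le> \<mu> l + mat_inner n (A l) P) \<longrightarrow> mat_inner n W P < d"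
  shows "\<exists>\<alpha> \<beta> v. dual_feasible n t W A \<alpha> \<beta> v \<and> v + (\<Sum>l\<in>{1..t}. \<beta> l * (\<mu> l - \<tau> l)) < d"
proof -
  have primal: "dot_on ({1..n} \<times> {1..n}) (\<lambda>p. W (fst p) (snd p)) x < d"
    if "\<forall>r\<in>constraints n t. dot_on ({1..n} \<times> {1..n}) (constraint_coeff A r) x
          \<le> constraint_bound \<mu> \<tau> r" for x
    unfolding dot_on_square using assms feasible_of_satisfies_constraints[OF that] by simp
  have fin: "finite ({1..n} \<times> {1..n})" by simp
  show ?thesis
  proof (rule farkas_strict[OF finite_constraints fin primal])
    fix y assume y: "\<forall>r\<in>constraints n t. 0 \<le> y r"
      "\<forall>p\<in>{1..n} \<times> {1..n}. (\<Sum>r\<in>constraints n t. y r * constraint_coeff A r p) = 0"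
      "(\<Sum>r\<in>constraints n t. y r * constraint_bound \<mu> \<tau> r) < 0"
    \<comment> \<open>A dual ray of negative value, added with a large weight to a trivially feasible point.\<close>
    define e where "e = y Mass + (\<Sum>l\<in>{1..t}. y (Metric l) * (\<mu> l - \<tau> l))"
    have ray: "dual_feasible n t (\<lambda>_ _. 0) A (\<lambda>i k. real k * y (Column (i, k))) (\<lambda>l. y (Metric l)) (y Mass)"
      using y(1,2) by (intro dual_feasible_of_multipliers) auto
    have "e < 0" using y(3) by (simp add: e_def constraint_bound_combination)
    define v0 where "v0 = (\<Sum>i\<in>{1..n}. \<Sum>k\<in>{1..n}. \<bar>real k * W i k\<bar>)"
    define s where "s = (\<bar>v0 - d\<bar> + 1) / - e"
    have "0 \<le> s" unfolding s_def using \<open>e < 0\<close> by (intro divide_nonneg_pos) auto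
    have feasible: "dual_feasible n t W A (\<lambda>i k. 0 + s * (real k * y (Column (i, k))))
        (\<lambda>l. 0 + s * y (Metric l)) (v0 + s * y Mass)"
      unfolding v0_def using dual_feasible_trivial ray \<open>0 \<le> s\<close> by (rule dual_feasible_add_ray)
    have "v0 + s * y Mass + (\<Sum>l\<in>{1..t}. (0 + s * y (Metric l)) * (\<mu> l - \<tau> l))
        = v0 + s * e"
      by (simp add: e_def sum_distrib_left algebra_simps)
    also have "\<dots> < d" using \<open>e < 0\<close> by (simp add: s_def)
    finally show ?thesis using feasible by blast
  next
    fix y assume y: "\<forall>r\<in>constraints n t. 0 \<le> y r"
      "\<forall>p\<in>{1..n} \<times> {1..n}. (\<Sum>r\<in>constraints n t. y r * constraint_coeff A r p) = W (fst p) (snd p)"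
      "(\<Sum>r\<in>constraints n t. y r * constraint_bound \<mu> \<tau> r) < d"
    then have "dual_feasible n t W A (\<lambda>i k. real k * y (Column (i, k))) (\<lambda>l. y (Metric l)) (y Mass)"
      by (intro dual_feasible_of_multipliers) auto
    moreover have "y Mass + (\<Sum>l\<in>{1..t}. y (Metric l) * (\<mu> l - \<tau> l)) < d"
      using y(3) by (simp add: constraint_bound_combination)
    ultimately show ?thesis by blast
  qed
qed

lemma lp_duality:
  "(SUP P\<in>{P \<in> Delta n. \<forall>l\<in>{1..t}. \<tau> l \<le> \<mu> l + mat_inner n (A l) P}. ereal (c + mat_inner n W P))
    = Inf {ereal (c + v + (\<Sum>l\<in>{1..t}. \<beta> l * (\<mu> l - \<tau> l))) | \<alpha> \<beta> v. dual_feasible n t W A \<alpha> \<beta> v}"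
  (is "Sup ?primal = Inf ?dual")
proof (rule antisym)
  show "Sup ?primal \<le> Inf ?dual"
    using weak_duality by (fastforce intro!: SUP_least Inf_greatest)
  show "Inf ?dual \<le> Sup ?primal"
  proof (rule dense_ge)
    fix z assume "Sup ?primal < z"
    show "Inf ?dual \<le> z"
    proof (cases z)
      case (real d)
      have "mat_inner n W P < d - c"
        if "P \<in> Delta n" "\<forall>l\<in>{1..t}. \<tau> l \<le> \<mu> l + mat_inner n (A l) P" for P
      proof -
        have le: "ereal (c + mat_inner n W P) \<le> Sup ?primal" using that by (intro SUP_upper) auto
        show ?thesis using le_less_trans[OF le \<open>Sup ?primal < z\<close>] real by simp
      qed
      then obtain \<alpha> \<beta> v where "dual_feasible n t W A \<alpha> \<beta> v"
        and "v + (\<Sum>l\<in>{1..t}. \<beta> l * (\<mu> l - \<tau> l)) < d - c"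
        using strong_duality by blast
      then have "Inf ?dual \<le> ereal (c + v + (\<Sum>l\<in>{1..t}. \<beta> l * (\<mu> l - \<tau> l)))"
        by (intro Inf_lower) blast
      also have "\<dots> \<le> z" using \<open>v + (\<Sum>l\<in>{1..t}. \<beta> l * (\<mu> l - \<tau> l)) < d - c\<close> real by simp
      finally show ?thesis .
    qed (use \<open>Sup ?primal < z\<close> in auto)
  qed
qed

lemma lp_value_eq_INF_dual:
  "lp_value n t m c (\<lambda>Q i k. real k * W Q i k) \<mu> (\<lambda>l i k. real k * A l i k) \<tau> Psi \<theta>
    = (INF Q\<in>Delta n. Inf {ereal (c Q - (\<Sum>i\<in>{1..n}. \<Sum>k\<in>{1..n}. Q i k * PsiT m Psi \<theta> i) + v
          + (\<Sum>l\<in>{1..t}. \<beta> l * (\<mu> l - \<tau> l))) | \<alpha> \<beta> v. dual_feasible n t (W Q) A \<alpha> \<beta> v})"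
  (is "_ = (INF Q\<in>Delta n. Inf (?dual Q))")
proof -
  have "lp_value n t m c (\<lambda>Q i k. real k * W Q i k) \<mu> (\<lambda>l i k. real k * A l i k) \<tau> Psi \<theta>
      = Inf (\<Union>Q\<in>Delta n. ?dual Q)"
    unfolding lp_value_def dual_feasible_def by (rule arg_cong[of _ _ Inf]) (auto simp: algebra_simps)
  also have "\<dots> = (INF Q\<in>Delta n. Inf (?dual Q))"
  proof (rule antisym)
    show "Inf (\<Union>Q\<in>Delta n. ?dual Q) \<le> (INF Q\<in>Delta n. Inf (?dual Q))"
      by (rule INF_greatest, rule Inf_superset_mono) blast
    show "(INF Q\<in>Delta n. Inf (?dual Q)) \<le> Inf (\<Union>Q\<in>Delta n. ?dual Q)"
    proof (rule Inf_greatest)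
      fix x assume "x \<in> (\<Union>Q\<in>Delta n. ?dual Q)"
      then obtain Q where "Q \<in> Delta n" "x \<in> ?dual Q" by blast
      then show "(INF Q\<in>Delta n. Inf (?dual Q)) \<le> x" by (meson INF_lower2 Inf_lower)
    qed
  qed
  finally show ?thesis .
qed

lemma Gamma_eq_affine_constraints:
  fixes a b :: "nat \<Rightarrow> nat \<Rightarrow> real" and f g :: "nat \<Rightarrow> nat \<Rightarrow> nat \<Rightarrow> nat \<Rightarrow> real"
    and J y :: "nat \<Rightarrow> nat"
  obtains \<mu> A where
    "\<And>\<tau>. Gamma n t a b f g J y \<tau> = {P. \<forall>l\<in>{1..t}. \<tau> l \<le> \<mu> l + mat_inner n (A l) P}"
proof -
  have "\<forall>l. \<exists>c0 C. \<forall>P. (\<Sum>k\<in>{0..n}. \<Sum>j<J l. 1 / g l j k (lstar n y)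
      * (a l j * dotv n (pv1 P k) (\<lambda>s. real (y s)) + b l j * dotv n (pv0 n P k) (\<lambda>s. 1 - real (y s))
         + f l j k (lstar n y) * rr n P k)) = c0 + mat_inner n C P"
    using affine_in_Gamma_constraint unfolding affine_in_def by blast
  then obtain \<mu> A where "\<forall>l P. (\<Sum>k\<in>{0..n}. \<Sum>j<J l. 1 / g l j k (lstar n y)
      * (a l j * dotv n (pv1 P k) (\<lambda>s. real (y s)) + b l j * dotv n (pv0 n P k) (\<lambda>s. 1 - real (y s))
         + f l j k (lstar n y) * rr n P k)) = \<mu> l + mat_inner n (A l) P"
    by metis
  then show thesis by (intro that) (simp add: Gamma_def)
qed

lemma game_value_eq_lp_value:
  assumes O0_eq: "\<And>Q P. O0 n a b f g J Q P = c0 + mat_inner n C Q + mat_inner n (W Q) P"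
    and Gamma_eq: "Gamma n t a b f g J y \<tau> = {P. \<forall>l\<in>{1..t}. \<tau> l \<le> \<mu> l + mat_inner n (A l) P}"
  shows "game_value n t m a b f g J y \<tau> Psi \<theta>
    = lp_value n t m (aff_scalar n c0 C) (\<lambda>Q i k. real k * W Q i k) \<mu> (\<lambda>l i k. real k * A l i k)
        \<tau> Psi \<theta>"
proof -
  define \<psi> where "\<psi> Q = (\<Sum>i\<in>{1..n}. \<Sum>k\<in>{1..n}. Q i k * PsiT m Psi \<theta> i)" for Q
  have objective: "O0 n a b f g J Q P - dotv n (\<lambda>i. \<Sum>k\<in>{1..n}. Q i k) (PsiT m Psi \<theta>)
      = aff_scalar n c0 C Q - \<psi> Q + mat_inner n (W Q) P" for Q P
    by (simp add: O0_eq \<psi>_def aff_scalar_def mat_inner_def dotv_def sum_distrib_right)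
  have "game_value n t m a b f g J y \<tau> Psi \<theta>
      = (INF Q\<in>Delta n. SUP P\<in>{P \<in> Delta n. \<forall>l\<in>{1..t}. \<tau> l \<le> \<mu> l + mat_inner n (A l) P}.
           ereal (aff_scalar n c0 C Q - \<psi> Q + mat_inner n (W Q) P))"
    unfolding game_value_def objective Gamma_eq by (simp add: Int_def)
  also have "\<dots> = (INF Q\<in>Delta n. Inf {ereal (aff_scalar n c0 C Q - \<psi> Q + v
      + (\<Sum>l\<in>{1..t}. \<beta> l * (\<mu> l - \<tau> l))) | \<alpha> \<beta> v. dual_feasible n t (W Q) A \<alpha> \<beta> v})"
    unfolding lp_duality ..
  also have "\<dots> = lp_value n t m (aff_scalar n c0 C) (\<lambda>Q i k. real k * W Q i k) \<mu>
      (\<lambda>l i k. real k * A l i k) \<tau> Psi \<theta>"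
    unfolding lp_value_eq_INF_dual \<psi>_def ..
  finally show ?thesis .
qed

theorem theorem6:
  fixes n t :: nat
    and a b :: "nat \<Rightarrow> nat \<Rightarrow> real"
    and f g :: "nat \<Rightarrow> nat \<Rightarrow> nat \<Rightarrow> nat \<Rightarrow> real"
    and J :: "nat \<Rightarrow> nat"
    and y :: "nat \<Rightarrow> nat"
  assumes "n \<ge> 1" and "t \<ge> 1"
    and "\<forall>i\<in>{1..n}. y i \<in> {0, 1}"
    and "\<forall>i\<le>t. \<forall>j<J i. \<forall>k\<le>n. \<forall>l\<le>n. g i j k l \<noteq> 0"
  shows "\<exists>c0 C Z0 ZL (\<mu>::nat \<Rightarrow> real) (B::nat \<Rightarrow> nat \<Rightarrow> nat \<Rightarrow> real).
           \<forall>(\<tau>::nat \<Rightarrow> real) (m::nat) (Psi::nat \<Rightarrow> nat \<Rightarrow> real) (\<theta>::nat \<Rightarrow> real).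
             m \<ge> 1 \<longrightarrow>
             game_value n t m a b f g J y \<tau> Psi \<theta>
             = lp_value n t m (aff_scalar n c0 C) (aff_matrix n Z0 ZL) \<mu> B \<tau> Psi \<theta>"
proof -
  obtain K0 K1 Z0 ZL where O0_eq: "\<And>Q P. O0 n a b f g J Q P
      = K0 + mat_inner n K1 Q + mat_inner n (\<lambda>i k. Z0 i k + mat_inner n (ZL i k) Q) P"
    using biaffine_in_O0[of n a b f g J] unfolding biaffine_in_def by blast
  obtain \<mu> A where Gamma_eq:
    "\<And>\<tau>. Gamma n t a b f g J y \<tau> = {P. \<forall>l\<in>{1..t}. \<tau> l \<le> \<mu> l + mat_inner n (A l) P}"
    using Gamma_eq_affine_constraints[of n t a b f g J y] by blast
  have Z_eq: "aff_matrix n (\<lambda>i k. real k * Z0 i k) (\<lambda>i k j l. real k * ZL i k j l)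
      = (\<lambda>Q i k. real k * (Z0 i k + mat_inner n (ZL i k) Q))"
    by (intro ext) (simp add: aff_matrix_def mat_inner_def sum_distrib_left algebra_simps)
  have "game_value n t m a b f g J y \<tau> Psi \<theta> = lp_value n t m (aff_scalar n K0 K1)
      (aff_matrix n (\<lambda>i k. real k * Z0 i k) (\<lambda>i k j l. real k * ZL i k j l))
      \<mu> (\<lambda>l i k. real k * A l i k) \<tau> Psi \<theta>" for \<tau> m Psi \<theta>
    unfolding Z_eq by (rule game_value_eq_lp_value[OF O0_eq Gamma_eq])
  then show ?thesis by blast
qed

end
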